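(* Every nonempty closed subspace of an $S^{\ast}$-well-filtered space is $S^{\ast}$-well-filtered.
   Context: All spaces are $T_0$. The specialization order of $X$ is given by $x\le y$ iff $x\in cl(\{y\})$; ${\uparrow}$ is taken with respect to it; a subset is saturated if it is an upper set in the specialization order. $K(X)$ denotes the set of all nonempty compact saturated subsets of $X$; a family in $K(X)$ is filtered if any two members contain a common member. $X$ is $S^{\ast}$-well-filtered if for every filtered family $\{K_i\mid i\in I\}\subseteq K(X)$, every $G\in K(X)$ and every nonempty open $U$, $\bigcap_{i\in I}K_i\cap G\subseteq U$ implies $K_i\cap G\subseteq U$ for some $i$. *)

theory Defs
  imports "HOL-Analysis.Analysis"
begin

definition spec_le :: "'a topology \<Rightarrow> 'a \<Rightarrow> 'a \<Rightarrow> bool" where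
  "spec_le X x y \<longleftrightarrow> x \<in> topspace X \<and> y \<in> topspace X \<and> x \<in> X closure_of {y}"

definition saturated_in :: "'a topology \<Rightarrow> 'a set \<Rightarrow> bool" where
  "saturated_in X S \<longleftrightarrow> S \<subseteq> topspace X \<and> (\<forall>x\<in>S. \<forall>y. spec_le X x y \<longrightarrow> y \<in> S)"

definition KX :: "'a topology \<Rightarrow> 'a set set" where
  "KX X = {K. K \<noteq> {} \<and> compactin X K \<and> saturated_in X K}"

definition filtered_K :: "'a topology \<Rightarrow> 'a set set \<Rightarrow> bool" where
  "filtered_K X \<K> \<longleftrightarrow> \<K> \<subseteq> KX X \<and> \<K> \<noteq> {} \<and>
     (\<forall>K1\<in>\<K>. \<forall>K2\<in>\<K>. \<exists>K3\<in>\<K>. K3 \<subseteq> K1 \<inter> K2)"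

definition sstar_well_filtered :: "'a topology \<Rightarrow> bool" where
  "sstar_well_filtered X \<longleftrightarrow>
     (\<forall>\<K> G U. filtered_K X \<K> \<and> G \<in> KX X \<and> openin X U \<and> U \<noteq> {} \<and>
        \<Inter>\<K> \<inter> G \<subseteq> U \<longrightarrow> (\<exists>K\<in>\<K>. K \<inter> G \<subseteq> U))"

end

theory Submission
  imports Defs
begin

text \<open>
  The saturations (upward closures) in X of a filtered family and of G in K(A) are again
  compact saturated, form a filtered family in K(X), and meet the subspace A exactly in the
  original sets. An open set U of A is the trace on A of the open set X - (A - U) of X,
  which is where closedness of A is used. Hence the S*-well-filteredness of X, applied to the
  saturations and to X - (A - U), transfers back to A by intersecting with A.
\<close>

definition saturation :: "'a topology \<Rightarrow> 'a set \<Rightarrow> 'a set" where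
  "saturation X K = {y. \<exists>x\<in>K. spec_le X x y}"

lemma spec_le_refl: "x \<in> topspace X \<Longrightarrow> spec_le X x x"
  unfolding spec_le_def using closure_of_subset[of "{x}" X] by simp

lemma spec_le_trans:
  assumes "spec_le X x y" "spec_le X y z"
  shows "spec_le X x z"
proof -
  have "X closure_of {y} \<subseteq> X closure_of {z}"
    using assms by (intro closure_of_minimal) (auto simp: spec_le_def)
  then show ?thesis
    using assms unfolding spec_le_def by blast
qed

lemma spec_le_openin:
  assumes "openin X W" "x \<in> W" "spec_le X x y"
  shows "y \<in> W"
  using assms in_closure_of[of x X "{y}"] unfolding spec_le_def by auto

lemma spec_le_subtopology:
  assumes "x \<in> A" "y \<in> A" "spec_le X x y"
  shows "spec_le (subtopology X A) x y"
  using assms closure_of_subtopology[of X A "{y}"] unfolding spec_le_def by auto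

lemma subset_saturation: "K \<subseteq> topspace X \<Longrightarrow> K \<subseteq> saturation X K"
  unfolding saturation_def by (auto intro: spec_le_refl)

lemma saturation_mono: "K \<subseteq> L \<Longrightarrow> saturation X K \<subseteq> saturation X L"
  unfolding saturation_def by auto

lemma saturation_subset_topspace: "saturation X K \<subseteq> topspace X"
  unfolding saturation_def spec_le_def by blast

lemma saturated_in_saturation: "saturated_in X (saturation X K)"
  using saturation_subset_topspace[of X K] spec_le_trans[of X]
  unfolding saturated_in_def saturation_def by blast

lemma compactin_saturation:
  assumes "compactin X K"
  shows "compactin X (saturation X K)"
  unfolding compactin_def
proof (intro conjI allI impI)
  show "saturation X K \<subseteq> topspace X"
    by (rule saturation_subset_topspace)
  fix \<U> assume \<U>: "(\<forall>U\<in>\<U>. openin X U) \<and> saturation X K \<subseteq> \<Union>\<U>"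
  then have "K \<subseteq> \<Union>\<U>"
    using subset_saturation[OF compactin_subset_topspace[OF assms]] by (meson subset_trans)
  then obtain \<F> where \<F>: "finite \<F>" "\<F> \<subseteq> \<U>" "K \<subseteq> \<Union>\<F>"
    using assms \<U> unfolding compactin_def by auto
  have "saturation X K \<subseteq> \<Union>\<F>"
  proof
    fix y assume "y \<in> saturation X K"
    then obtain x where "x \<in> K" "spec_le X x y"
      unfolding saturation_def by blast
    moreover obtain W where "W \<in> \<F>" "x \<in> W"
      using \<F>(3) \<open>x \<in> K\<close> by blast
    moreover have "openin X W"
      using \<U> \<F>(2) \<open>W \<in> \<F>\<close> by blast
    ultimately show "y \<in> \<Union>\<F>"
      using spec_le_openin[of X W x y] by blast
  qed
  with \<F> show "\<exists>\<F>. finite \<F> \<and> \<F> \<subseteq> \<U> \<and> saturation X K \<subseteq> \<Union>\<F>"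
    by blast
qed

lemma saturation_in_KX:
  assumes "K \<noteq> {}" "compactin X K"
  shows "saturation X K \<in> KX X"
  using assms subset_saturation[OF compactin_subset_topspace[OF assms(2)]]
  unfolding KX_def by (auto simp: compactin_saturation saturated_in_saturation)

lemma saturation_Int_eq:
  assumes "saturated_in (subtopology X A) K"
  shows "saturation X K \<inter> A = K"
proof
  have K: "K \<subseteq> topspace X" "K \<subseteq> A"
    using assms unfolding saturated_in_def by auto
  then show "K \<subseteq> saturation X K \<inter> A"
    using subset_saturation by blast
  show "saturation X K \<inter> A \<subseteq> K"
    using assms K(2) spec_le_subtopology[of _ A _ X]
    unfolding saturation_def saturated_in_def by blast
qed

lemma KX_subtopology_saturation:
  assumes "K \<in> KX (subtopology X A)"
  shows "saturation X K \<in> KX X" and "saturation X K \<inter> A = K"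
  using assms saturation_in_KX[of K X] saturation_Int_eq[of X A K]
  unfolding KX_def compactin_subtopology by auto

lemma filtered_K_saturation:
  assumes "filtered_K (subtopology X A) \<K>"
  shows "filtered_K X (saturation X ` \<K>)"
  unfolding filtered_K_def
proof (intro conjI ballI)
  show "saturation X ` \<K> \<subseteq> KX X" "saturation X ` \<K> \<noteq> {}"
    using assms KX_subtopology_saturation(1)[of _ X A] unfolding filtered_K_def by blast+
  fix K1 K2 assume "K1 \<in> saturation X ` \<K>" "K2 \<in> saturation X ` \<K>"
  then obtain L1 L2 where "L1 \<in> \<K>" "L2 \<in> \<K>" "K1 = saturation X L1" "K2 = saturation X L2"
    by blast
  moreover obtain L3 where "L3 \<in> \<K>" "L3 \<subseteq> L1 \<inter> L2"
    using assms \<open>L1 \<in> \<K>\<close> \<open>L2 \<in> \<K>\<close> unfolding filtered_K_def by blast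
  ultimately show "\<exists>K3\<in>saturation X ` \<K>. K3 \<subseteq> K1 \<inter> K2"
    using saturation_mono[of L3 L1 X] saturation_mono[of L3 L2 X] by blast
qed

lemma Inter_saturation_Int_subset:
  assumes "\<And>K. K \<in> \<K> \<Longrightarrow> saturated_in (subtopology X A) K"
  shows "\<Inter>(saturation X ` \<K>) \<inter> A \<subseteq> \<Inter>\<K>"
proof
  fix z assume z: "z \<in> \<Inter>(saturation X ` \<K>) \<inter> A"
  show "z \<in> \<Inter>\<K>"
  proof
    fix K assume "K \<in> \<K>"
    then have "z \<in> saturation X K \<inter> A"
      using z by blast
    then show "z \<in> K"
      using saturation_Int_eq[OF assms[OF \<open>K \<in> \<K>\<close>]] by simp
  qed
qed

lemma openin_subtopology_closedin_extend:
  assumes "closedin X A" "openin (subtopology X A) U"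
  obtains V where "openin X V" "V \<inter> A = U" "topspace X - A \<subseteq> V"
proof
  have "A \<subseteq> topspace X"
    using assms(1) by (rule closedin_subset)
  then have "closedin (subtopology X A) (A - U)"
    using closedin_diff[OF closedin_topspace assms(2)] by (simp add: Int_absorb1)
  then show "openin X (topspace X - (A - U))"
    by (intro openin_diff openin_topspace closedin_trans_full[OF _ assms(1)])
  show "(topspace X - (A - U)) \<inter> A = U"
    using openin_subset[OF assms(2)] \<open>A \<subseteq> topspace X\<close> by auto
qed auto

theorem mainTheorem14:
  fixes X :: "'a topology" and A :: "'a set"
  assumes "t0_space X"
    and "sstar_well_filtered X"
    and "closedin X A"
    and "A \<noteq> {}"
  shows "sstar_well_filtered (subtopology X A)"
  unfolding sstar_well_filtered_def
proof (intro allI impI, elim conjE)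
  fix \<K> G U
  assume \<K>: "filtered_K (subtopology X A) \<K>" and G: "G \<in> KX (subtopology X A)"
    and U: "openin (subtopology X A) U" "U \<noteq> {}" and "\<Inter>\<K> \<inter> G \<subseteq> U"
  obtain V where V: "openin X V" "V \<inter> A = U" "topspace X - A \<subseteq> V"
    using openin_subtopology_closedin_extend[OF assms(3) U(1)] .
  have \<K>_KX: "K \<in> KX (subtopology X A)" if "K \<in> \<K>" for K
    using \<K> that unfolding filtered_K_def by blast
  have into_V: "T \<subseteq> V" if "T \<subseteq> topspace X" "T \<inter> A \<subseteq> U" for T
    using that V(2,3) by blast
  have "\<Inter>(saturation X ` insert G \<K>) \<inter> A \<subseteq> \<Inter>(insert G \<K>)"
    using G \<K>_KX by (intro Inter_saturation_Int_subset) (auto simp: KX_def)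
  also have "\<dots> \<subseteq> U"
    using \<open>\<Inter>\<K> \<inter> G \<subseteq> U\<close> by (simp add: Int_commute)
  finally have "\<Inter>(saturation X ` insert G \<K>) \<subseteq> V"
    by (intro into_V) (use saturation_subset_topspace[of X G] in auto)
  then have "\<Inter>(saturation X ` \<K>) \<inter> saturation X G \<subseteq> V"
    by (simp add: Int_commute)
  moreover have "V \<noteq> {}"
    using U(2) V(2) by blast
  ultimately obtain K where "K \<in> \<K>" "saturation X K \<inter> saturation X G \<subseteq> V"
    using assms(2) filtered_K_saturation[OF \<K>] KX_subtopology_saturation(1)[OF G] V(1)
    unfolding sstar_well_filtered_def by (metis (no_types, lifting) imageE)
  then have "K \<inter> G \<subseteq> U"
    using KX_subtopology_saturation(2)[OF \<K>_KX[OF \<open>K \<in> \<K>\<close>]]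
      KX_subtopology_saturation(2)[OF G] V(2) by blast
  with \<open>K \<in> \<K>\<close> show "\<exists>K\<in>\<K>. K \<inter> G \<subseteq> U"
    by blast
qed

end
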